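(* Let $0<\eta\le1/8$, $0<\delta<1$, and let $(q_1,\dots,q_n)$ be a probability distribution on $[n]$ (e.g. the diagonal of a density matrix $\tilde\rho$). Let $m=2.13\,\eta^{-2}(n\ln2+\ln(1/\delta))$, draw $N\sim\mathrm{Pois}(m)$, then draw $N$ independent samples from $(q_i)$, let $N_i$ be the number of samples equal to $i$, and set $\hat q_i=N_i/m$. Then with probability at least $1-\delta$, $\sum_{i=1}^n|q_i-\hat q_i|\le\eta$.
   Context: In the paper the samples are outcomes of measuring prepared copies of the state $\tilde\rho$ in the computational basis, so $q_i=\tilde\rho_{ii}$; the estimate divides by the expected number $m$ of samples, not by $N$. *)

theory Defs
  imports "HOL-Probability.Probability"
begin

definition poissonized_samples :: "real \<Rightarrow> 'a pmf \<Rightarrow> 'a list pmf" where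
  "poissonized_samples m Q = bind_pmf (poisson_pmf m) (\<lambda>N. replicate_pmf N Q)"

end

theory Submission
  imports Defs
begin

(* The l1 distance sum_i |q_i - N_i/m| is the largest of the 2^n signed sums
   sum_i s_i (q_i - N_i/m) with s_i = +-1, so a union bound reduces the claim to
   a tail bound for one fixed sign vector.  Poissonization makes the exponential
   moments explicit: E exp (sum_k g x_k) = exp (m (E_Q exp g - 1)).  A Chernoff
   bound with tilt eta, together with exp (+-eta) -+ eta <= exp eta - eta, bounds
   each tail by exp (m (exp eta - 1 - eta - eta^2)); for eta <= 1/8 this exponent
   is at most -m eta^2 / 2.13 = -(n ln 2 + ln (1/delta)), which pays for the 2^n
   sign vectors. *)

lemma exp_minus_add_le_exp_diff:
  fixes x :: real
  assumes "0 \<le> x"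
  shows "exp (-x) + x \<le> exp x - x"
proof -
  obtain t where "exp (-x) = (\<Sum>k<3. (-x) ^ k / fact k) + exp t / fact 3 * (-x) ^ 3"
    using Maclaurin_exp_le[of "-x" 3] by blast
  then have "exp (-x) \<le> 1 - x + x\<^sup>2 / 2"
    using assms by (simp add: numeral_3_eq_3 power2_eq_square)
  with exp_lower_Taylor_quadratic[OF assms] show ?thesis by linarith
qed

lemma exp_sub_quadratic_le:
  fixes x :: real
  assumes "0 < x" "x \<le> 1/8"
  shows "exp x - 1 - x - x\<^sup>2 \<le> -(100/213) * x\<^sup>2"
proof -
  obtain t where t: "\<bar>t\<bar> \<le> \<bar>x\<bar>" "exp x = (\<Sum>k<3. x ^ k / fact k) + exp t / fact 3 * x ^ 3"
    using Maclaurin_exp_le[of x 3] by blast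
  have "exp t \<le> exp (1/8)" using t assms by simp
  also have "exp (1/8::real) \<le> 1 + 1/8 + (1/8)\<^sup>2" by (rule exp_bound) auto
  finally have "exp t \<le> 1.15" by (simp add: power2_eq_square)
  with t(2) assms have "exp x \<le> 1 + x + x\<^sup>2/2 + (23/120) * x ^ 3"
    by (simp add: numeral_3_eq_3 fact_numeral power2_eq_square mult_right_mono)
  moreover have "x ^ 3 \<le> x\<^sup>2 / 8"
    using assms by (simp add: power3_eq_cube power2_eq_square mult_left_mono)
  moreover have "0 \<le> x\<^sup>2" by simp
  ultimately show ?thesis by linarith
qed

lemma sum_list_map_eq_sum_count_list:
  fixes f :: "'a \<Rightarrow> 'b :: comm_semiring_1"
  assumes "finite I" "\<And>x. x \<notin> I \<Longrightarrow> f x = 0"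
  shows "sum_list (map f xs) = (\<Sum>i\<in>I. of_nat (count_list xs i) * f i)"
proof (induction xs)
  case (Cons x xs)
  have "(\<Sum>i\<in>I. of_nat (count_list (x # xs) i) * f i)
      = (\<Sum>i\<in>I. of_nat (count_list xs i) * f i) + (\<Sum>i\<in>I. if x = i then f i else 0)"
    by (auto simp: sum.distrib[symmetric] distrib_right add.commute intro!: sum.cong)
  also have "(\<Sum>i\<in>I. if x = i then f i else 0) = f x"
    using assms by (simp add: sum.delta)
  finally show ?case using Cons by (simp add: add.commute)
qed simp

lemma nn_integral_exp_sum_list_replicate_pmf:
  fixes g :: "'a \<Rightarrow> real"
  shows "(\<integral>\<^sup>+xs. exp (sum_list (map g xs)) \<partial>replicate_pmf N Q) = (\<integral>\<^sup>+x. exp (g x) \<partial>Q) ^ N"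
proof (induction N)
  case (Suc N)
  have "(\<integral>\<^sup>+xs. exp (sum_list (map g xs)) \<partial>replicate_pmf (Suc N) Q)
      = (\<integral>\<^sup>+x. \<integral>\<^sup>+xs. ennreal (exp (g x)) * exp (sum_list (map g xs)) \<partial>replicate_pmf N Q \<partial>Q)"
    by (simp add: exp_add ennreal_mult')
  also have "\<dots> = (\<integral>\<^sup>+x. ennreal (exp (g x)) * (\<integral>\<^sup>+x. exp (g x) \<partial>Q) ^ N \<partial>Q)"
    by (simp add: nn_integral_cmult Suc)
  also have "\<dots> = (\<integral>\<^sup>+x. exp (g x) \<partial>Q) ^ Suc N"
    by (simp add: nn_integral_multc mult.commute)
  finally show ?case .
qed simp

lemma nn_integral_power_poisson_pmf:
  fixes m z :: real
  assumes "0 < m" "0 \<le> z"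
  shows "(\<integral>\<^sup>+N. ennreal z ^ N \<partial>poisson_pmf m) = exp (m * (z - 1))"
proof -
  have "(\<integral>\<^sup>+N. ennreal z ^ N \<partial>poisson_pmf m)
      = (\<integral>\<^sup>+N. ennreal (exp (-m) * ((m * z) ^ N /\<^sub>R fact N)) \<partial>count_space UNIV)"
    unfolding nn_integral_measure_pmf using assms
    by (intro nn_integral_cong) (simp add: ennreal_power ennreal_mult'[symmetric] power_mult_distrib field_simps)
  also have "\<dots> = (\<Sum>N. ennreal (exp (-m) * ((m * z) ^ N /\<^sub>R fact N)))"
    by (simp add: nn_integral_count_space_nat)
  also have "\<dots> = exp (-m) * exp (m * z)"
    using assms by (intro suminf_ennreal_eq sums_mult exp_converges) auto
  also have "exp (-m) * exp (m * z) = exp (m * (z - 1))"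
    by (simp add: mult_exp_exp algebra_simps)
  finally show ?thesis .
qed

lemma nn_integral_exp_sum_list_poissonized_samples:
  fixes g :: "'a \<Rightarrow> real" and Q :: "'a pmf"
  assumes "0 < m" "integrable Q (\<lambda>x. exp (g x))"
  shows "(\<integral>\<^sup>+xs. exp (sum_list (map g xs)) \<partial>poissonized_samples m Q)
           = exp (m * ((\<integral>x. exp (g x) \<partial>Q) - 1))"
proof -
  have "(\<integral>\<^sup>+x. exp (g x) \<partial>Q) = ennreal (\<integral>x. exp (g x) \<partial>Q)"
    using assms(2) by (intro nn_integral_eq_integral) auto
  then show ?thesis
    using assms(1)
    by (simp add: poissonized_samples_def nn_integral_bind_pmf
                  nn_integral_exp_sum_list_replicate_pmf nn_integral_power_poisson_pmf)
qed

lemma poissonized_samples_signed_deviation_tail: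
  fixes Q :: "'a pmf" and s :: "'a \<Rightarrow> real" and m \<theta> t :: real
  assumes "0 < m" "0 < \<theta>" "finite I" "set_pmf Q \<subseteq> I" "\<And>i. \<bar>s i\<bar> = 1"
  shows "measure_pmf.prob (poissonized_samples m Q)
           {xs. t \<le> (\<Sum>i\<in>I. s i * (real (count_list xs i) / m - pmf Q i))}
         \<le> exp (m * (exp \<theta> - 1 - \<theta> - \<theta> * t))"
proof -
  define g where "g i = (if i \<in> I then \<theta> * s i else 0)" for i
  define c where "c = (\<Sum>i\<in>I. s i * pmf Q i)"
  define \<phi> where "\<phi> = (\<Sum>i\<in>I. pmf Q i * exp (\<theta> * s i))"
  let ?P = "measure_pmf (poissonized_samples m Q)"
  have "integrable Q (\<lambda>x. exp (g x))"
    using assms(3,4) by (intro integrable_measure_pmf_finite) (auto intro: finite_subset)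
  then have "(\<integral>\<^sup>+xs. exp (sum_list (map g xs)) \<partial>?P) = exp (m * ((\<integral>x. exp (g x) \<partial>Q) - 1))"
    by (rule nn_integral_exp_sum_list_poissonized_samples[OF assms(1)])
  also have "(\<integral>x. exp (g x) \<partial>Q) = \<phi>"
    unfolding \<phi>_def using assms(3,4) by (subst integral_measure_pmf_real[of I]) (auto simp: g_def mult.commute)
  finally have mgf: "has_bochner_integral ?P (\<lambda>xs. exp (sum_list (map g xs))) (exp (m * (\<phi> - 1)))"
    by (intro has_bochner_integral_nn_integral) auto
  have sum_g: "sum_list (map g xs) = \<theta> * (\<Sum>i\<in>I. s i * real (count_list xs i))" for xs
    by (subst sum_list_map_eq_sum_count_list[OF assms(3)]) (auto simp: g_def sum_distrib_left mult_ac)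
  have deviation: "(\<Sum>i\<in>I. s i * (real (count_list xs i) / m - pmf Q i))
                  = (\<Sum>i\<in>I. s i * real (count_list xs i)) / m - c" for xs
    by (simp add: c_def right_diff_distrib sum_subtractf sum_divide_distrib)
  have rescale: "t \<le> S / m - c \<longleftrightarrow> \<theta> * (m * (t + c)) \<le> \<theta> * S" for S
  proof -
    have "t \<le> S / m - c \<longleftrightarrow> m * (t + c) \<le> S" using assms(1) by (simp add: field_simps)
    also have "\<dots> \<longleftrightarrow> \<theta> * (m * (t + c)) \<le> \<theta> * S" using assms(2) by simp
    finally show ?thesis .
  qed
  have event: "{xs. t \<le> (\<Sum>i\<in>I. s i * (real (count_list xs i) / m - pmf Q i))}
             = {xs \<in> space ?P. \<theta> * (m * (t + c)) \<le> sum_list (map g xs)}"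
    by (simp add: deviation rescale sum_g)
  have "measure ?P {xs \<in> space ?P. \<theta> * (m * (t + c)) \<le> sum_list (map g xs)}
      \<le> exp (- 1 * (\<theta> * (m * (t + c)))) * (\<integral>xs\<in>space ?P. exp (1 * sum_list (map g xs)) \<partial>?P)"
    using mgf by (intro measure_pmf.Chernoff_ineq_ge) (auto simp: set_integrable_def has_bochner_integral_iff)
  also have "\<dots> = exp (m * (\<phi> - \<theta> * c - 1 - \<theta> * t))"
    using mgf by (simp add: set_lebesgue_integral_def has_bochner_integral_iff mult_exp_exp algebra_simps)
  also have "\<dots> \<le> exp (m * (exp \<theta> - 1 - \<theta> - \<theta> * t))"
  proof -
    have "\<phi> - \<theta> * c = (\<Sum>i\<in>I. pmf Q i * (exp (\<theta> * s i) - \<theta> * s i))"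
      by (simp add: \<phi>_def c_def sum_distrib_left right_diff_distrib sum_subtractf mult_ac)
    also have "\<dots> \<le> (\<Sum>i\<in>I. pmf Q i * (exp \<theta> - \<theta>))"
    proof (intro sum_mono mult_left_mono)
      fix i
      have "s i = 1 \<or> s i = -1" using assms(5)[of i] by linarith
      then show "exp (\<theta> * s i) - \<theta> * s i \<le> exp \<theta> - \<theta>"
        using exp_minus_add_le_exp_diff[of \<theta>] assms(2) by auto
    qed simp
    also have "\<dots> = exp \<theta> - \<theta>"
      using assms(3,4) by (simp add: sum_distrib_right[symmetric] sum_pmf_eq_1)
    finally show ?thesis using assms(1) by (simp add: mult_left_mono)
  qed
  finally show ?thesis by (simp only: event)
qed

definition sign_pattern :: "'a set \<Rightarrow> 'a \<Rightarrow> real" where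
  "sign_pattern A i = (if i \<in> A then 1 else -1)"

lemma abs_sign_pattern [simp]: "\<bar>sign_pattern A i\<bar> = 1"
  by (simp add: sign_pattern_def)

lemma sum_abs_eq_sum_sign_pattern:
  fixes a :: "'a \<Rightarrow> real"
  shows "(\<Sum>i\<in>I. \<bar>a i\<bar>) = (\<Sum>i\<in>I. sign_pattern {i \<in> I. 0 \<le> a i} i * a i)"
  by (intro sum.cong) (auto simp: sign_pattern_def)

lemma prob_sum_abs_ge_le_sum_sign_patterns:
  fixes P :: "'b pmf" and f :: "'b \<Rightarrow> 'a \<Rightarrow> real"
  assumes "finite I"
  shows "measure_pmf.prob P {x. t \<le> (\<Sum>i\<in>I. \<bar>f x i\<bar>)}
         \<le> (\<Sum>A\<in>Pow I. measure_pmf.prob P {x. t \<le> (\<Sum>i\<in>I. sign_pattern A i * f x i)})"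
proof -
  have "{x. t \<le> (\<Sum>i\<in>I. \<bar>f x i\<bar>)} \<subseteq> (\<Union>A\<in>Pow I. {x. t \<le> (\<Sum>i\<in>I. sign_pattern A i * f x i)})"
    by (force simp: sum_abs_eq_sum_sign_pattern)
  then have "measure_pmf.prob P {x. t \<le> (\<Sum>i\<in>I. \<bar>f x i\<bar>)}
             \<le> measure_pmf.prob P (\<Union>A\<in>Pow I. {x. t \<le> (\<Sum>i\<in>I. sign_pattern A i * f x i)})"
    by (intro measure_pmf.finite_measure_mono) auto
  also have "\<dots> \<le> (\<Sum>A\<in>Pow I. measure_pmf.prob P {x. t \<le> (\<Sum>i\<in>I. sign_pattern A i * f x i)})"
    using assms by (intro measure_pmf.finite_measure_subadditive_finite) auto
  finally show ?thesis .
qed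

lemma poissonized_samples_l1_deviation_tail:
  fixes Q :: "'a pmf" and m \<theta> t :: real
  assumes "0 < m" "0 < \<theta>" "finite I" "set_pmf Q \<subseteq> I"
  shows "measure_pmf.prob (poissonized_samples m Q)
           {xs. t \<le> (\<Sum>i\<in>I. \<bar>pmf Q i - real (count_list xs i) / m\<bar>)}
         \<le> 2 ^ card I * exp (m * (exp \<theta> - 1 - \<theta> - \<theta> * t))"
proof -
  let ?P = "poissonized_samples m Q"
  have "measure_pmf.prob ?P {xs. t \<le> (\<Sum>i\<in>I. \<bar>pmf Q i - real (count_list xs i) / m\<bar>)}
        \<le> (\<Sum>A\<in>Pow I. measure_pmf.prob ?P
               {xs. t \<le> (\<Sum>i\<in>I. sign_pattern A i * (pmf Q i - real (count_list xs i) / m))})"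
    using assms(3) by (rule prob_sum_abs_ge_le_sum_sign_patterns)
  also have "\<dots> \<le> (\<Sum>A\<in>Pow I. exp (m * (exp \<theta> - 1 - \<theta> - \<theta> * t)))"
  proof (intro sum_mono)
    fix A
    have "(\<Sum>i\<in>I. sign_pattern A i * (pmf Q i - real (count_list xs i) / m))
          = (\<Sum>i\<in>I. - sign_pattern A i * (real (count_list xs i) / m - pmf Q i))" for xs
      by (intro sum.cong) (simp_all add: algebra_simps)
    then show "measure_pmf.prob ?P {xs. t \<le> (\<Sum>i\<in>I. sign_pattern A i * (pmf Q i - real (count_list xs i) / m))}
               \<le> exp (m * (exp \<theta> - 1 - \<theta> - \<theta> * t))"
      using poissonized_samples_signed_deviation_tail[OF assms, where s = "\<lambda>i. - sign_pattern A i"] by simp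
  qed
  also have "\<dots> = 2 ^ card I * exp (m * (exp \<theta> - 1 - \<theta> - \<theta> * t))"
    using assms(3) by (simp add: card_Pow)
  finally show ?thesis .
qed

theorem lemma8:
  fixes \<eta> \<delta> :: real and n :: nat and Q :: "nat pmf"
  assumes "0 < \<eta>" "\<eta> \<le> 1/8" "0 < \<delta>" "\<delta> < 1"
    and "set_pmf Q \<subseteq> {1..n}"
  defines "m \<equiv> 2.13 * \<eta> powi (-2) * (real n * ln 2 + ln (1 / \<delta>))"
  shows "measure_pmf.prob (poissonized_samples m Q)
           {xs. (\<Sum>i=1..n. \<bar>pmf Q i - real (count_list xs i) / m\<bar>) \<le> \<eta>} \<ge> 1 - \<delta>"
proof -
  define L where "L = real n * ln 2 + ln (1 / \<delta>)"
  let ?P = "poissonized_samples m Q"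
  let ?far = "{xs. \<eta> \<le> (\<Sum>i=1..n. \<bar>pmf Q i - real (count_list xs i) / m\<bar>)}"
  have "0 < L" using assms(3,4) by (simp add: L_def add_nonneg_pos)
  then have "0 < m" and m_\<eta>: "m * \<eta>\<^sup>2 = 2.13 * L"
    using assms(1) by (simp_all add: m_def L_def power_int_minus field_simps)
  have "exp (m * (exp \<eta> - 1 - \<eta> - \<eta> * \<eta>)) \<le> exp (- L)"
    using mult_left_mono[OF exp_sub_quadratic_le[OF assms(1,2)], of m] \<open>0 < m\<close> m_\<eta>
    by (simp add: power2_eq_square algebra_simps)
  moreover have "exp L = 2 ^ n / \<delta>"
    using assms(3) by (simp add: L_def exp_add exp_of_nat_mult)
  ultimately have "2 ^ n * exp (m * (exp \<eta> - 1 - \<eta> - \<eta> * \<eta>)) \<le> \<delta>"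
    by (simp add: exp_minus field_simps)
  then have "measure_pmf.prob ?P ?far \<le> \<delta>"
    using poissonized_samples_l1_deviation_tail[OF \<open>0 < m\<close> assms(1) _ assms(5), of \<eta>] by simp
  moreover have "measure_pmf.prob ?P (space ?P - ?far) = 1 - measure_pmf.prob ?P ?far"
    by (rule measure_pmf.prob_compl) simp
  moreover have "measure_pmf.prob ?P (space ?P - ?far) \<le> measure_pmf.prob ?P
                   {xs. (\<Sum>i=1..n. \<bar>pmf Q i - real (count_list xs i) / m\<bar>) \<le> \<eta>}"
    by (intro measure_pmf.finite_measure_mono) auto
  ultimately show ?thesis by linarith
qed

end
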